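(* Let $q$ be a system of Beurling primes with Beurling integers $\{\nu_n\}_{n\geq1}$ and $\sigma_c(\zeta_q)<\infty$, and let $\varepsilon>0$ and $C_0=\sigma_c(\zeta_q)+\varepsilon$. Then for almost every $q'>1$ there are only finitely many triples $(j,n,m)\in\mathbb{N}^3$ such that $$\Bigl|(q')^j-\frac{\nu_n}{\nu_m}\Bigr|\leq \nu_n^{-C_0}\nu_m^{-C_0}.$$
   Context: A system of Beurling primes is an increasing sequence (finite or infinite) $q=\{q_n\}$ of real numbers with $q_n>1$ (and $q_n\to\infty$ if infinite) such that $\{\log q_n\}$ is linearly independent over $\mathbb{Q}$. The Beurling integers $\{\nu_n\}_{n\geq1}$ are all finite products of elements of $q$ (including $\nu_1=1$), listed in increasing order. $\zeta_q(s)=\sum_{n\geq1}\nu_n^{-s}$ and $\sigma_c(\zeta_q)$ is its abscissa of convergence. *)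

theory Defs
  imports "HOL-Analysis.Analysis"
begin

definition beurling_primes :: "nat set \<Rightarrow> (nat \<Rightarrow> real) \<Rightarrow> bool" where
  "beurling_primes I q \<longleftrightarrow>
     (I = UNIV \<or> (\<exists>N. I = {..<N})) \<and>
     strict_mono_on I q \<and>
     (\<forall>i\<in>I. q i > 1) \<and>
     (I = UNIV \<longrightarrow> filterlim q at_top sequentially) \<and>
     (\<forall>F (c :: nat \<Rightarrow> rat). finite F \<and> F \<subseteq> I \<and>
         (\<Sum>i\<in>F. of_rat (c i) * ln (q i)) = 0 \<longrightarrow> (\<forall>i\<in>F. c i = 0))"

definition beurling_integers :: "nat set \<Rightarrow> (nat \<Rightarrow> real) \<Rightarrow> real set" where
  "beurling_integers I q =
     {\<Prod>i\<in>F. q i ^ e i | F e. finite F \<and> F \<subseteq> I}"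

definition zeta_conv_set :: "nat set \<Rightarrow> (nat \<Rightarrow> real) \<Rightarrow> real set" where
  "zeta_conv_set I q = {\<sigma>. (\<lambda>x. x powr (-\<sigma>)) summable_on beurling_integers I q}"

definition sigma_c :: "nat set \<Rightarrow> (nat \<Rightarrow> real) \<Rightarrow> real" where
  "sigma_c I q = Inf (zeta_conv_set I q)"

end

theory Submission
  imports Defs
begin

text \<open>
  For fixed \<open>a > 1\<close> the set of \<open>t \<ge> a\<close> with \<open>\<bar>t ^ j - x / y\<bar> \<le> \<nu>\<^sub>x \<nu>\<^sub>y\<close>, where
  \<open>\<nu>\<^sub>x = x powr -C\<^sub>0\<close>, is an interval of length \<open>O(\<nu>\<^sub>x \<nu>\<^sub>y / a ^ j)\<close>, because \<open>t \<mapsto> t ^ j\<close>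
  has slope at least \<open>a ^ (j - 1)\<close> there. Since \<open>C\<^sub>0\<close> exceeds the abscissa of convergence,
  \<open>\<Sum> \<nu>\<^sub>x\<close> converges, so the lengths are summable over all triples and Borel-Cantelli
  shows that almost every \<open>t \<ge> a\<close> lies in only finitely many of these intervals.
  Letting \<open>a\<close> run through \<open>1 + 1 / (k + 1)\<close> covers all \<open>t > 1\<close>.
\<close>

lemma power_diff_ge_mult_power:
  fixes u v a :: real
  assumes "0 \<le> a" "a \<le> v" "v \<le> u" "j \<ge> 1"
  shows "(u - v) * a ^ (j - 1) \<le> u ^ j - v ^ j"
proof -
  have j: "j = Suc (j - 1)" using assms(4) by simp
  have "(u - v) * a ^ (j - 1) \<le> (u - v) * v ^ (j - 1)"
    using assms by (intro mult_left_mono power_mono) auto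
  also have "\<dots> \<le> u * u ^ (j - 1) - v * v ^ (j - 1)"
    using assms mult_left_mono[OF power_mono[of v u "j - 1"], of u] by (simp add: algebra_simps)
  finally show ?thesis by (subst (1 2) j) simp
qed

lemma abs_diff_mult_power_le:
  fixes u v a :: real
  assumes "1 \<le> a" "a \<le> u" "a \<le> v" "j \<ge> 1"
  shows "\<bar>u - v\<bar> * a ^ (j - 1) \<le> \<bar>u ^ j - v ^ j\<bar>"
  using power_diff_ge_mult_power[of a v u j] power_diff_ge_mult_power[of a u v j] assms
  by (cases "v \<le> u") (auto simp: abs_if power_mono)

lemma lborel_power_near:
  fixes a r d :: real
  assumes "a > 1" "j \<ge> 1" "d \<ge> 0"
  defines "A \<equiv> {t. a \<le> t \<and> \<bar>t ^ j - r\<bar> \<le> d}"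
  shows "A \<in> sets lborel" "emeasure lborel A < \<infinity>" "measure lborel A \<le> 4 * d / a ^ (j - 1)"
proof -
  show meas: "A \<in> sets lborel" unfolding A_def by measurable
  define R where "R = 2 * d / a ^ (j - 1)"
  have R: "R \<ge> 0" unfolding R_def using assms by simp
  have "emeasure lborel A < \<infinity> \<and> measure lborel A \<le> 2 * R"
  proof (cases "A = {}")
    case True
    then show ?thesis using R by simp
  next
    case False
    then obtain s where s: "s \<in> A" by blast
    have sub: "A \<subseteq> {s - R .. s + R}"
    proof
      fix t assume t: "t \<in> A"
      have "\<bar>t - s\<bar> * a ^ (j - 1) \<le> \<bar>t ^ j - s ^ j\<bar>"
        using s t assms unfolding A_def by (intro abs_diff_mult_power_le) auto
      also have "\<dots> \<le> 2 * d" using s t unfolding A_def by auto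
      finally have "\<bar>t - s\<bar> \<le> R" unfolding R_def using assms by (simp add: field_simps)
      then show "t \<in> {s - R .. s + R}" by auto
    qed
    have fin: "emeasure lborel {s - R .. s + R} < \<infinity>" using R by simp
    have "emeasure lborel A \<le> emeasure lborel {s - R .. s + R}"
      using sub by (rule emeasure_mono) simp
    then have "emeasure lborel A < \<infinity>" using fin by (rule le_less_trans)
    moreover have "measure lborel A \<le> measure lborel {s - R .. s + R}"
      using sub meas fin by (intro measure_mono_fmeasurable) (auto simp: fmeasurable_def)
    ultimately show ?thesis using R by simp
  qed
  then show "emeasure lborel A < \<infinity>" "measure lborel A \<le> 4 * d / a ^ (j - 1)"
    unfolding R_def by auto
qed

lemma summable_on_times_nonneg:
  fixes f g :: "_ \<Rightarrow> real"
  assumes "f summable_on A" "g summable_on B" "\<And>x. x \<in> A \<Longrightarrow> f x \<ge> 0" "\<And>y. y \<in> B \<Longrightarrow> g y \<ge> 0"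
  shows "(\<lambda>(x, y). f x * g y) summable_on A \<times> B"
proof (rule summable_on_SigmaI[where g = "\<lambda>x. f x * infsum g B"])
  show "((\<lambda>y. (\<lambda>(x, y). f x * g y) (x, y)) has_sum f x * infsum g B) B" for x
    using has_sum_cmult_right[OF has_sum_infsum[OF assms(2)]] by simp
  show "(\<lambda>x. f x * infsum g B) summable_on A"
    using assms(1) by (rule summable_on_cmult_left)
qed (use assms(3,4) in auto)

lemma borel_cantelli_AE_countable:
  assumes "countable T"
    and sets: "\<And>i. i \<in> T \<Longrightarrow> A i \<in> sets M"
    and fin: "\<And>i. i \<in> T \<Longrightarrow> emeasure M (A i) < \<infinity>"
    and sum: "(\<lambda>i. measure M (A i)) summable_on T"
  shows "AE x in M. finite {i \<in> T. x \<in> A i}"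
proof (cases "finite T")
  case False
  define g where "g = from_nat_into T"
  have bij: "bij_betw g UNIV T"
    unfolding g_def using assms(1) False by (rule bij_betw_from_nat_into)
  then have gT: "g n \<in> T" for n by (auto simp: bij_betw_def)
  have "(\<lambda>n. measure M (A (g n))) summable_on UNIV"
    using summable_on_reindex_bij_betw[OF bij, of "\<lambda>i. measure M (A i)"] sum by simp
  then have "summable (\<lambda>n. measure M (A (g n)))"
    by (simp add: summable_on_UNIV_nonneg_real_iff)
  then have "AE x in M. eventually (\<lambda>n. x \<in> space M - A (g n)) sequentially"
    by (intro borel_cantelli_AE1) (use sets fin gT in auto)
  then show ?thesis
  proof (rule AE_mp, intro AE_I2 impI)
    fix x assume "eventually (\<lambda>n. x \<in> space M - A (g n)) sequentially"
    then obtain N where N: "\<And>n. n \<ge> N \<Longrightarrow> x \<notin> A (g n)"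
      by (auto simp: eventually_sequentially)
    have "{i \<in> T. x \<in> A i} \<subseteq> g ` {..<N}"
    proof
      fix i assume i: "i \<in> {i \<in> T. x \<in> A i}"
      then obtain n where n: "i = g n" using bij by (auto simp: bij_betw_def)
      with i have "x \<in> A (g n)" by simp
      then have "n < N" using N[of n] by (cases "N \<le> n") auto
      with n show "i \<in> g ` {..<N}" by blast
    qed
    then show "finite {i \<in> T. x \<in> A i}" by (rule finite_subset) simp
  qed
qed simp

lemma AE_finite_power_approximations_above:
  fixes B :: "real set" and w :: "real \<Rightarrow> real" and a :: real
  assumes "countable B" "w summable_on B" "\<And>x. w x \<ge> 0" "a > 1"
  shows "AE t in lborel. a \<le> t \<longrightarrow>
           finite {(j :: nat, x, y). j \<ge> 1 \<and> x \<in> B \<and> y \<in> B \<and> \<bar>t ^ j - x / y\<bar> \<le> w x * w y}"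
    (is "AE t in lborel. a \<le> t \<longrightarrow> finite (?S t)")
proof -
  define T where "T = {1::nat..} \<times> B \<times> B"
  define A where "A = (\<lambda>(j, x, y). {t. a \<le> t \<and> \<bar>t ^ j - x / y\<bar> \<le> w x * w y})"
  define h where "h = (\<lambda>(j, p). 4 * a * (1 / a) ^ j * (\<lambda>(x, y). w x * w y) p)"
  have A: "A i \<in> sets lborel" "emeasure lborel (A i) < \<infinity>" "measure lborel (A i) \<le> h i"
    if "i \<in> T" for i
  proof -
    obtain j x y where i: "i = (j, x, y)" and j: "j \<ge> 1" using \<open>i \<in> T\<close> by (auto simp: T_def)
    have "a * a ^ (j - 1) = a ^ j" using j by (simp flip: power_Suc)
    then have "4 * (w x * w y) / a ^ (j - 1) = h i"
      unfolding h_def i using assms(4) by (simp add: field_simps power_one_over)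
    then show "A i \<in> sets lborel" "emeasure lborel (A i) < \<infinity>" "measure lborel (A i) \<le> h i"
      using lborel_power_near[OF assms(4) j, of "w x * w y" "x / y"] assms(3)
      unfolding A_def i by auto
  qed
  have geometric: "(\<lambda>j::nat. 4 * a * (1 / a) ^ j) summable_on {1..}"
  proof -
    have "summable (\<lambda>j::nat. 4 * a * (1 / a) ^ j)"
      using assms(4) by (intro summable_mult summable_geometric) auto
    then have "(\<lambda>j::nat. 4 * a * (1 / a) ^ j) summable_on UNIV"
      using assms(4) by (subst summable_on_UNIV_nonneg_real_iff) auto
    then show ?thesis by (rule summable_on_subset_banach) simp
  qed
  have pairs: "(\<lambda>(x, y). w x * w y) summable_on B \<times> B"
    using assms(2,2) by (rule summable_on_times_nonneg) (simp_all add: assms(3))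
  have "h summable_on T"
    unfolding h_def T_def using geometric pairs
    by (rule summable_on_times_nonneg) (use assms(3,4) in \<open>auto split: prod.split\<close>)
  then have "(\<lambda>i. measure lborel (A i)) summable_on T"
    by (rule summable_on_comparison_test) (use A(3) in auto)
  moreover have "countable T" unfolding T_def using assms(1) by simp
  ultimately have "AE t in lborel. finite {i \<in> T. t \<in> A i}"
    by (intro borel_cantelli_AE_countable) (use A in auto)
  then show ?thesis
  proof (rule AE_mp, intro AE_I2 impI)
    fix t assume "finite {i \<in> T. t \<in> A i}" "a \<le> t"
    have "?S t \<subseteq> {i \<in> T. t \<in> A i}"
      using \<open>a \<le> t\<close> by (auto simp: T_def A_def)
    then show "finite (?S t)" using \<open>finite {i \<in> T. t \<in> A i}\<close> by (rule finite_subset)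
  qed
qed

lemma AE_finite_power_approximations:
  fixes B :: "real set" and w :: "real \<Rightarrow> real"
  assumes "countable B" "w summable_on B" "\<And>x. w x \<ge> 0"
  shows "AE t in lborel. 1 < t \<longrightarrow>
           finite {(j :: nat, x, y). j \<ge> 1 \<and> x \<in> B \<and> y \<in> B \<and> \<bar>t ^ j - x / y\<bar> \<le> w x * w y}"
    (is "AE t in lborel. 1 < t \<longrightarrow> finite (?S t)")
proof -
  have "\<forall>k::nat. AE t in lborel. 1 + inverse (real (Suc k)) \<le> t \<longrightarrow> finite (?S t)"
    using AE_finite_power_approximations_above[OF assms] by simp
  then have "AE t in lborel. \<forall>k::nat. 1 + inverse (real (Suc k)) \<le> t \<longrightarrow> finite (?S t)"
    by (subst AE_all_countable)
  then show ?thesis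
  proof (rule AE_mp, intro AE_I2 impI)
    fix t :: real
    assume fin: "\<forall>k::nat. 1 + inverse (real (Suc k)) \<le> t \<longrightarrow> finite (?S t)" and "1 < t"
    then obtain k where "inverse (real (Suc k)) < t - 1" using reals_Archimedean[of "t - 1"] by auto
    then have "1 + inverse (real (Suc k)) \<le> t" by simp
    then show "finite (?S t)" using fin by blast
  qed
qed

lemma beurling_integers_ge_1:
  assumes "beurling_primes I q" "x \<in> beurling_integers I q"
  shows "1 \<le> x"
proof -
  obtain F e where x: "x = (\<Prod>i\<in>F. q i ^ e i)" "F \<subseteq> I"
    using assms(2) unfolding beurling_integers_def by blast
  have "1 < q i" if "i \<in> F" for i
    using assms(1) that x(2) by (auto simp: beurling_primes_def)
  then show ?thesis unfolding x(1) by (intro prod_ge_1 one_le_power) (simp add: less_imp_le)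
qed

lemma prod_power_in_range_prod_list:
  assumes "finite F"
  shows "(\<Prod>i\<in>F. q i ^ e i) \<in> range (\<lambda>l. prod_list (map q l))"
  using assms
proof (induction F rule: finite_induct)
  case empty
  show ?case by (rule image_eqI[of _ _ "[]"]) simp_all
next
  case (insert i F)
  then obtain l where "(\<Prod>i\<in>F. q i ^ e i) = prod_list (map q l)" by blast
  then have "(\<Prod>i\<in>insert i F. q i ^ e i) = prod_list (map q (replicate (e i) i @ l))"
    using insert by (simp add: prod_list_replicate)
  then show ?case by blast
qed

lemma countable_beurling_integers: "countable (beurling_integers I q)"
proof (rule countable_subset)
  show "beurling_integers I q \<subseteq> range (\<lambda>l. prod_list (map q l))"
    unfolding beurling_integers_def using prod_power_in_range_prod_list by blast
qed simp

lemma infinite_beurling_integers: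
  assumes "beurling_primes I q" "i \<in> I"
  shows "infinite (beurling_integers I q)"
proof -
  have "1 < q i" using assms by (simp add: beurling_primes_def)
  then have "inj (\<lambda>n. q i ^ n)"
    by (intro strict_mono_imp_inj_on strict_monoI power_strict_increasing) auto
  moreover have "q i ^ n \<in> beurling_integers I q" for n
    unfolding beurling_integers_def
    by (rule CollectI, rule exI[of _ "{i}"], rule exI[of _ "\<lambda>_. n"]) (simp add: assms(2))
  then have "range (\<lambda>n. q i ^ n) \<subseteq> beurling_integers I q" by blast
  ultimately show ?thesis using finite_imageD finite_subset by blast
qed

lemma zeta_conv_set_pos:
  assumes "beurling_primes I q" "I \<noteq> {}" "\<sigma> \<in> zeta_conv_set I q"
  shows "0 < \<sigma>"
proof (rule ccontr)
  assume "\<not> 0 < \<sigma>"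
  have "(\<lambda>x. x powr (-\<sigma>)) summable_on beurling_integers I q"
    using assms(3) by (simp add: zeta_conv_set_def)
  then have summable_1: "(\<lambda>_. 1::real) summable_on beurling_integers I q"
    by (rule summable_on_comparison_test)
       (use beurling_integers_ge_1[OF assms(1)] \<open>\<not> 0 < \<sigma>\<close> in \<open>auto intro: ge_one_powr_ge_zero\<close>)
  obtain i where "i \<in> I" using assms(2) by blast
  then have "infinite (beurling_integers I q)" by (rule infinite_beurling_integers[OF assms(1)])
  from infsum_diverge_constant[OF this, of "1::real"] summable_1 show False by simp
qed

lemma summable_on_powr_beurling_integers:
  assumes "beurling_primes I q" "I \<noteq> {}" "zeta_conv_set I q \<noteq> {}" "sigma_c I q < C"
  shows "(\<lambda>x. x powr (-C)) summable_on beurling_integers I q"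
proof -
  \<comment> \<open>Without a lower bound \<open>sigma_c\<close> would be the junk value of \<open>Inf\<close>.\<close>
  have "bdd_below (zeta_conv_set I q)"
    using zeta_conv_set_pos[OF assms(1,2)] by (intro bdd_belowI[of _ 0]) (auto intro: less_imp_le)
  then obtain \<sigma> where \<sigma>: "\<sigma> \<in> zeta_conv_set I q" "\<sigma> < C"
    using assms(3,4) cInf_less_iff unfolding sigma_c_def by blast
  then have "(\<lambda>x. x powr (-\<sigma>)) summable_on beurling_integers I q"
    by (simp add: zeta_conv_set_def)
  then show ?thesis
    by (rule summable_on_comparison_test)
       (use beurling_integers_ge_1[OF assms(1)] \<sigma>(2) in \<open>auto intro: powr_mono\<close>)
qed

theorem mainTheorem3:
  fixes I :: "nat set" and q :: "nat \<Rightarrow> real" and \<epsilon> C\<^sub>0 :: real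
  assumes "beurling_primes I q"
    and "I \<noteq> {}"
    and "zeta_conv_set I q \<noteq> {}"
    and "\<epsilon> > 0"
    and "C\<^sub>0 = sigma_c I q + \<epsilon>"
  shows "AE q' in lborel. q' > 1 \<longrightarrow>
           finite {(j :: nat, x :: real, y :: real).
                     j \<ge> 1 \<and> x \<in> beurling_integers I q \<and> y \<in> beurling_integers I q \<and>
                     \<bar>q' ^ j - x / y\<bar> \<le> x powr (-C\<^sub>0) * y powr (-C\<^sub>0)}"
proof -
  have "(\<lambda>x. x powr (-C\<^sub>0)) summable_on beurling_integers I q"
    using assms by (intro summable_on_powr_beurling_integers) auto
  then show ?thesis
    by (rule AE_finite_power_approximations[OF countable_beurling_integers]) simp
qed

end
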